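(* Let $f(q)=\sum_{n\ge0}a(n)q^n$ with real coefficients satisfy $a(n)>0$ for all $n>n_0$, for some $n_0\in\mathbb{N}_0$. Let $\lambda\in\{0,1\}$, $m\in\mathbb{N}$, and set $\delta_0=1$, $\delta_1=2$. Then for every $n\ge0$ the coefficient of $q^n$ in $q^{-m\lambda^2/4}f(q)\theta_\lambda(m\tau)$ is at least $\delta_\lambda a(n)-2\sum_{0\le j\le n_0}|a(j)|$. Moreover, if for some $n_1\in\mathbb{N}$ one has $\delta_\lambda a(n)>2\sum_{0\le j\le n_0}|a(j)|$ for all $n\ge n_1$, then the coefficient of $q^{\nu}$ in $f(q)\theta_\lambda(m\tau)$ is positive for every exponent $\nu\ge n_1+\frac{m\lambda^2}{4}$.
   Context: $q=e^{2\pi i\tau}$. For $\lambda\in\{0,1\}$, $\theta_\lambda(\tau)=\sum_{n\in\mathbb{Z}}q^{(n+\lambda/2)^2}$, so $\theta_\lambda(m\tau)=\sum_{n\in\mathbb{Z}}q^{m(n+\lambda/2)^2}$; thus $q^{-m\lambda^2/4}\theta_\lambda(m\tau)$ is a power series in integral powers of $q$, and the exponents occurring in $f(q)\theta_\lambda(m\tau)$ lie in $\mathbb{Z}+\frac{m\lambda^2}{4}$. *)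

theory Defs
  imports Complex_Main
begin

text \<open>Coefficient of \<open>q^\<nu>\<close> (real exponent \<nu>) in the formal product
  \<open>f(q) \<theta>_\<lambda>(m\<tau>) = (\<Sum>j\<ge>0. a j q^j) (\<Sum>n\<in>\<int>. q^(m (n+\<lambda>/2)^2))\<close>:
  the sum over all pairs (j,n) with \<open>j + m (n+\<lambda>/2)^2 = \<nu>\<close> of \<open>a j\<close>.\<close>

definition theta_pairs :: "nat \<Rightarrow> nat \<Rightarrow> real \<Rightarrow> nat \<Rightarrow> int set" where
  "theta_pairs lam m \<nu> j = {n::int. real j + real m * (real_of_int n + real lam / 2)^2 = \<nu>}"

definition ftheta_coeff :: "(nat \<Rightarrow> real) \<Rightarrow> nat \<Rightarrow> nat \<Rightarrow> real \<Rightarrow> real" where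
  "ftheta_coeff a lam m \<nu> =
     (\<Sum>j\<in>{j::nat. theta_pairs lam m \<nu> j \<noteq> {}}. a j * real (card (theta_pairs lam m \<nu> j)))"

definition delta :: "nat \<Rightarrow> real" where
  "delta lam = (if lam = 0 then 1 else 2)"

end

theory Submission
  imports Defs
begin

text \<open>Each \<open>j\<close> contributes \<open>a j\<close> with multiplicity at most 2 (the two square roots), and
  the term \<open>j = n\<close> at the exponent \<open>n + m\<lambda>\<^sup>2/4\<close> contributes exactly \<open>\<delta>\<^sub>\<lambda> a n\<close>
  (from \<open>k = 0\<close>, and also \<open>k = -1\<close> when \<open>\<lambda> = 1\<close>). Only finitely many \<open>j \<le> \<nu>\<close> occur,
  all terms with \<open>j > n\<^sub>0\<close> are nonnegative, and those with \<open>j \<le> n\<^sub>0\<close> are at least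
  \<open>-2 \<bar>a j\<bar>\<close>.\<close>

lemma card_int_square_eq_le_2:
  fixes c l :: real
  shows "card {k::int. (real_of_int k + l)\<^sup>2 = c} \<le> 2"
proof -
  have "{k::int. (real_of_int k + l)\<^sup>2 = c} \<subseteq> {\<lfloor>sqrt c - l\<rfloor>, \<lfloor>- sqrt c - l\<rfloor>}"
  proof
    fix k assume "k \<in> {k::int. (real_of_int k + l)\<^sup>2 = c}"
    then have "(real_of_int k + l)\<^sup>2 = c"
      by simp
    then have "real_of_int k + l = sqrt c \<or> real_of_int k + l = - sqrt c"
      by (metis real_sqrt_abs abs_real_def add.inverse_inverse)
    then have "real_of_int k = sqrt c - l \<or> real_of_int k = - sqrt c - l"
      by linarith
    then show "k \<in> {\<lfloor>sqrt c - l\<rfloor>, \<lfloor>- sqrt c - l\<rfloor>}"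
      by (metis floor_of_int insertCI singletonI)
  qed
  then have "card {k::int. (real_of_int k + l)\<^sup>2 = c} \<le> card {\<lfloor>sqrt c - l\<rfloor>, \<lfloor>- sqrt c - l\<rfloor>}"
    by (intro card_mono) auto
  also have "\<dots> \<le> 2"
    by (simp add: card_insert_if)
  finally show ?thesis .
qed

lemma theta_pairs_eq:
  assumes "m > 0"
  shows "theta_pairs lam m \<nu> j =
           {k::int. (real_of_int k + real lam / 2)\<^sup>2 = (\<nu> - real j) / real m}"
  using assms unfolding theta_pairs_def by (auto simp: field_simps)

lemma card_theta_pairs_le_2:
  assumes "m > 0"
  shows "card (theta_pairs lam m \<nu> j) \<le> 2"
  unfolding theta_pairs_eq[OF assms] by (rule card_int_square_eq_le_2)

lemma theta_pairs_nonempty_imp_le: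
  assumes "theta_pairs lam m \<nu> j \<noteq> {}"
  shows "real j \<le> \<nu>"
proof -
  from assms obtain k where "real j + real m * (real_of_int k + real lam / 2)\<^sup>2 = \<nu>"
    unfolding theta_pairs_def by auto
  moreover have "0 \<le> real m * (real_of_int k + real lam / 2)\<^sup>2"
    by simp
  ultimately show ?thesis
    by linarith
qed

lemma card_theta_pairs_diagonal:
  assumes "m > 0" and "lam \<in> {0, 1}"
  shows "real (card (theta_pairs lam m (real n + real m * real lam ^ 2 / 4) n)) = delta lam"
proof -
  have "theta_pairs lam m (real n + real m * real lam ^ 2 / 4) n =
          {k::int. (real_of_int k + real lam / 2)\<^sup>2 = real lam ^ 2 / 4}"
    using assms(1) unfolding theta_pairs_eq[OF assms(1)] by (auto simp: field_simps)
  also have "\<dots> = (if lam = 0 then {0} else {0, -1})"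
  proof (cases "lam = 0")
    case False
    then have "lam = 1"
      using assms(2) by auto
    moreover have "(real_of_int k + 1 / 2)\<^sup>2 = 1 / 4 \<longleftrightarrow> k = 0 \<or> k = -1" for k :: int
    proof -
      have "(real_of_int k + 1 / 2)\<^sup>2 - 1 / 4 = real_of_int k * (real_of_int k + 1)"
        by (simp add: power2_eq_square algebra_simps)
      then have "(real_of_int k + 1 / 2)\<^sup>2 = 1 / 4 \<longleftrightarrow> real_of_int k * (real_of_int k + 1) = 0"
        by linarith
      also have "\<dots> \<longleftrightarrow> k = 0 \<or> k = -1"
        by (auto simp: add_eq_0_iff)
      finally show ?thesis .
    qed
    ultimately show ?thesis
      by auto
  qed auto
  finally show ?thesis
    by (simp add: delta_def)
qed

lemma ftheta_coeff_eq_sum_atMost: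
  assumes "\<nu> \<le> real N"
  shows "ftheta_coeff a lam m \<nu> = (\<Sum>j\<le>N. a j * real (card (theta_pairs lam m \<nu> j)))"
  unfolding ftheta_coeff_def
proof (rule sum.mono_neutral_left)
  show "{j. theta_pairs lam m \<nu> j \<noteq> {}} \<subseteq> {..N}"
    using assms theta_pairs_nonempty_imp_le by force
qed auto

lemma weighted_sum_lower_bound:
  fixes a c :: "nat \<Rightarrow> real"
  assumes "n \<le> N" and "n0 \<le> N"
    and c_nonneg: "\<And>j. 0 \<le> c j" and c_le_2: "\<And>j. j \<noteq> n \<Longrightarrow> c j \<le> 2"
    and pos: "\<And>j. j > n0 \<Longrightarrow> a j > 0"
  shows "c n * a n - 2 * (\<Sum>j\<le>n0. \<bar>a j\<bar>) \<le> (\<Sum>j\<le>N. a j * c j)"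
proof -
  have pointwise: "(if j = n then c n * a n else 0) - 2 * (if j \<le> n0 then \<bar>a j\<bar> else 0)
                     \<le> a j * c j" for j
  proof (cases "j = n \<or> n0 < j")
    case True
    then show ?thesis
      using pos[of j] c_nonneg[of j] by auto
  next
    case False
    have "- \<bar>a j\<bar> * c j \<le> a j * c j"
      using c_nonneg[of j] by (intro mult_right_mono) auto
    moreover have "\<bar>a j\<bar> * c j \<le> \<bar>a j\<bar> * 2"
      using False c_le_2[of j] by (intro mult_left_mono) auto
    ultimately show ?thesis
      using False by auto
  qed
  have "{j \<in> {..N}. j \<le> n0} = {..n0}"
    using \<open>n0 \<le> N\<close> by auto
  then have "(\<Sum>j\<le>N. if j \<le> n0 then \<bar>a j\<bar> else 0) = (\<Sum>j\<le>n0. \<bar>a j\<bar>)"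
    by (metis finite_atMost sum.inter_filter)
  then have "c n * a n - 2 * (\<Sum>j\<le>n0. \<bar>a j\<bar>) =
       (\<Sum>j\<le>N. (if j = n then c n * a n else 0) - 2 * (if j \<le> n0 then \<bar>a j\<bar> else 0))"
    using \<open>n \<le> N\<close> by (simp add: sum_subtractf sum_distrib_left[symmetric])
  also have "\<dots> \<le> (\<Sum>j\<le>N. a j * c j)"
    by (rule sum_mono) (rule pointwise)
  finally show ?thesis .
qed

lemma ftheta_coeff_diagonal_lower_bound:
  assumes pos: "\<And>n. n > n0 \<Longrightarrow> a n > 0"
    and "lam \<in> {0, 1}" and "m > 0"
  shows "delta lam * a n - 2 * (\<Sum>j\<le>n0. \<bar>a j\<bar>)
           \<le> ftheta_coeff a lam m (real n + real m * real lam ^ 2 / 4)"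
proof -
  define \<nu> where "\<nu> = real n + real m * real lam ^ 2 / 4"
  define N where "N = max n0 (nat \<lceil>\<nu>\<rceil>)"
  have "real n \<le> \<nu>"
    by (simp add: \<nu>_def)
  then have "n \<le> N"
    unfolding N_def by linarith
  have "\<nu> \<le> real N"
    unfolding N_def by linarith
  have "real (card (theta_pairs lam m \<nu> n)) * a n - 2 * (\<Sum>j\<le>n0. \<bar>a j\<bar>)
          \<le> (\<Sum>j\<le>N. a j * real (card (theta_pairs lam m \<nu> j)))"
    using \<open>n \<le> N\<close> card_theta_pairs_le_2[OF \<open>m > 0\<close>] pos
    by (intro weighted_sum_lower_bound) (auto simp: N_def)
  then show ?thesis
    using card_theta_pairs_diagonal[OF assms(3,2)] ftheta_coeff_eq_sum_atMost[OF \<open>\<nu> \<le> real N\<close>]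
    by (simp add: \<nu>_def mult.commute)
qed

theorem lemma6p1:
  fixes a :: "nat \<Rightarrow> real" and n0 m lam :: nat
  assumes pos: "\<And>n. n > n0 \<Longrightarrow> a n > 0"
    and lam: "lam \<in> {0, 1}"
    and m: "m \<ge> 1"
  shows "(\<forall>n::nat. ftheta_coeff a lam m (real n + real m * real lam ^ 2 / 4)
                     \<ge> delta lam * a n - 2 * (\<Sum>j\<le>n0. \<bar>a j\<bar>))
       \<and> (\<forall>n1::nat. n1 \<ge> 1 \<longrightarrow>
             (\<forall>n\<ge>n1. delta lam * a n > 2 * (\<Sum>j\<le>n0. \<bar>a j\<bar>)) \<longrightarrow>
             (\<forall>\<nu>::real. \<nu> - real m * real lam ^ 2 / 4 \<in> \<int> \<longrightarrow>
                 \<nu> \<ge> real n1 + real m * real lam ^ 2 / 4 \<longrightarrow>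
                 ftheta_coeff a lam m \<nu> > 0))"
proof -
  have lower_bound: "delta lam * a n - 2 * (\<Sum>j\<le>n0. \<bar>a j\<bar>)
                       \<le> ftheta_coeff a lam m (real n + real m * real lam ^ 2 / 4)" for n
    using ftheta_coeff_diagonal_lower_bound[OF pos lam] m by force
  moreover have "ftheta_coeff a lam m \<nu> > 0"
    if large: "\<forall>n\<ge>n1. delta lam * a n > 2 * (\<Sum>j\<le>n0. \<bar>a j\<bar>)"
      and "\<nu> - real m * real lam ^ 2 / 4 \<in> \<int>"
      and \<nu>_ge: "\<nu> \<ge> real n1 + real m * real lam ^ 2 / 4"
    for n1 :: nat and \<nu> :: real
  proof -
    obtain k :: int where k: "\<nu> - real m * real lam ^ 2 / 4 = of_int k"
      using \<open>\<nu> - real m * real lam ^ 2 / 4 \<in> \<int>\<close> by (auto elim: Ints_cases)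
    define n where "n = nat k"
    have "n \<ge> n1"
      using k \<nu>_ge unfolding n_def by linarith
    moreover have "\<nu> = real n + real m * real lam ^ 2 / 4"
      using k \<nu>_ge unfolding n_def by linarith
    ultimately show ?thesis
      using large lower_bound[of n] by force
  qed
  ultimately show ?thesis
    by auto
qed

end
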